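(* Let $f:\mathbb{R}^d\times\mathcal{X}\to\mathbb{R}$ be differentiable in $\theta$, with $\mathcal{X}$ a subset of a Euclidean space and $\sup_{x\in\mathcal{X}}\Vert x\Vert\le D<\infty$. Assume (A1): there are $K_1,K_2>0$ with $\Vert\nabla f(\theta,x)-\nabla f(\hat\theta,\hat x)\Vert\le K_1\Vert\theta-\hat\theta\Vert+K_2\Vert x-\hat x\Vert(\Vert\theta\Vert+\Vert\hat\theta\Vert+1)$ for all $\theta,\hat\theta\in\mathbb{R}^d$, $x,\hat x\in\mathcal{X}$; and (N): $(\xi_k)$ are i.i.d. random vectors in $\mathbb{R}^d$ independent of the minibatches, with continuous everywhere-positive density, $\mathbb{E}\xi_1=0$, $\sigma^2:=\mathbb{E}\Vert\xi_1\Vert^2<\infty$. Let $X_n=(x_1,\dots,x_n)$, $\hat X_n=(\hat x_1,\dots,\hat x_n)\in\mathcal{X}^n$ differ in at most one index, $b\in\{1,\dots,n\}$, $\eta>0$, $(\Omega_k)$ i.i.d. uniformly random $b$-subsets of $\{1,\dots,n\}$, and let $P,\hat P$ be the transition kernels of $\theta_k=\theta_{k-1}-\frac\eta b\sum_{i\in\Omega_k}\nabla f(\theta_{k-1},x_i)+\eta\xi_k$ and $\hat\theta_k=\hat\theta_{k-1}-\frac\eta b\sum_{i\in\Omega_k}\nabla f(\hat\theta_{k-1},\hat x_i)+\eta\xi_k$. Let $\theta_*$ and $\hat\theta_*$ be minimizers of $\frac1n\sum_if(\theta,x_i)$ and $\frac1n\sum_if(\theta,\hat x_i)$, $V(\theta)=1+\Vert\theta-\theta_*\Vert^2$,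 $\hat V(\theta)=1+\Vert\theta-\hat\theta_*\Vert^2$, and for $\psi>0$ let $d_\psi(\mu_1,\mu_2)=\int_{\mathbb{R}^d}(1+\psi V(\theta))\,|\mu_1-\mu_2|(d\theta)$. Then $$\sup_{\theta\in\mathbb{R}^d}\frac{d_\psi(\delta_\theta P,\delta_\theta\hat P)}{\hat V(\theta)}\le\frac{2b}{n}\max\Big\{\psi(4+8\eta^2K_1^2),\ 1+\psi\Big(1+\eta^2\sigma^2+(4+8\eta^2K_1^2)\Vert\theta_*-\hat\theta_*\Vert^2+4\eta^2\sup_{x\in\mathcal{X}}\Vert\nabla f(\theta_*,x)\Vert^2\Big)\Big\}.$$
   Context: $|\mu_1-\mu_2|$ is the total variation measure of the signed measure $\mu_1-\mu_2$; $\delta_\theta P=P(\theta,\cdot)$. *)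

theory Defs
  imports "HOL-Probability.Probability"
begin

definition tv_measure :: "'a measure \<Rightarrow> 'a measure \<Rightarrow> 'a measure" where
  "tv_measure M1 M2 = measure_of (space M1) (sets M1)
     (\<lambda>A. \<Squnion>{(\<Sum>B\<in>\<P>. ennreal \<bar>measure M1 B - measure M2 B\<bar>) | \<P>.
            finite \<P> \<and> disjoint \<P> \<and> \<P> \<subseteq> sets M1 \<and> \<Union>\<P> = A})"

definition d_psi :: "real \<Rightarrow> ('a \<Rightarrow> real) \<Rightarrow> 'a measure \<Rightarrow> 'a measure \<Rightarrow> ennreal" where
  "d_psi \<psi> V M1 M2 = (\<integral>\<^sup>+ t. ennreal (1 + \<psi> * V t) \<partial>tv_measure M1 M2)"

definition minibatch_pmf :: "nat \<Rightarrow> nat \<Rightarrow> nat set pmf" where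
  "minibatch_pmf n b = pmf_of_set {S. S \<subseteq> {1..n} \<and> card S = b}"

definition sgld_kernel ::
  "nat \<Rightarrow> nat \<Rightarrow> real \<Rightarrow> ('a::euclidean_space \<Rightarrow> 'b \<Rightarrow> 'a) \<Rightarrow> (nat \<Rightarrow> 'b) \<Rightarrow> 'a measure
    \<Rightarrow> 'a \<Rightarrow> 'a measure" where
  "sgld_kernel n b \<eta> G X N \<theta> =
     distr (measure_pmf (minibatch_pmf n b) \<Otimes>\<^sub>M N) borel
       (\<lambda>(S, \<xi>). \<theta> - (\<eta> / real b) *\<^sub>R (\<Sum>i\<in>S. G \<theta> (X i)) + \<eta> *\<^sub>R \<xi>)"

end

theory Submission
  imports Defs
begin

text \<open>
  Both kernels are mixtures, over the uniform minibatch \<open>S\<close>, of the noise law shifted by the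
  gradient step computed on \<open>S\<close>. On minibatches avoiding the (at most one) index where the data
  sets differ the two shifts coincide, so \<open>|\<delta>\<^sub>\<theta>P - \<delta>\<^sub>\<theta>P'|\<close> is dominated by the normalised sum,
  over the minibatches containing that index, of both shifted noise laws; these minibatches are a
  fraction at most \<open>b/n\<close> of all. As the noise is centred, the weight \<open>1 + \<psi> V\<close> integrates against the noise law
  shifted to \<open>a\<close> to \<open>1 + \<psi> (1 + \<parallel>a - \<theta>\<^sub>*\<parallel>\<^sup>2 + \<eta>\<^sup>2 \<sigma>\<^sup>2)\<close>, and the Lipschitz bound on the gradient
  together with \<open>\<parallel>u + v\<parallel>\<^sup>2 \<le> 2\<parallel>u\<parallel>\<^sup>2 + 2\<parallel>v\<parallel>\<^sup>2\<close> makes \<open>\<parallel>a - \<theta>\<^sub>*\<parallel>\<^sup>2\<close> affine in \<open>\<parallel>\<theta> - \<theta>'\<^sub>*\<parallel>\<^sup>2\<close>.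

  Nothing else is used: \<open>\<theta>\<^sub>*\<close> and \<open>\<theta>'\<^sub>*\<close> need not be minimisers, and neither the
  differentiability of \<open>f\<close> nor the density of the noise enters.
\<close>

section \<open>Total variation and mixtures of shifted noise\<close>

lemma nn_integral_tv_measure_le:
  assumes sets_eq: "sets M1 = sets \<nu>"
    and bound: "\<And>B. B \<in> sets \<nu> \<Longrightarrow> ennreal \<bar>measure M1 B - measure M2 B\<bar> \<le> emeasure \<nu> B"
  shows "(\<integral>\<^sup>+t. h t \<partial>tv_measure M1 M2) \<le> (\<integral>\<^sup>+t. h t \<partial>\<nu>)"
proof -
  define \<mu> where "\<mu> A = \<Squnion>{(\<Sum>B\<in>\<P>. ennreal \<bar>measure M1 B - measure M2 B\<bar>) | \<P>.
      finite \<P> \<and> disjoint \<P> \<and> \<P> \<subseteq> sets M1 \<and> \<Union>\<P> = A}" for A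
  have tv: "tv_measure M1 M2 = measure_of (space M1) (sets M1) \<mu>"
    unfolding tv_measure_def \<mu>_def ..
  have sets_tv: "sets (tv_measure M1 M2) = sets \<nu>"
    unfolding tv sets_measure_of_conv using sets.space_closed[of M1] sets.sigma_sets_eq[of M1] sets_eq
    by simp
  have \<mu>_le: "\<mu> A \<le> emeasure \<nu> A" if "A \<in> sets \<nu>" for A
    unfolding \<mu>_def
  proof (rule Sup_least, clarify)
    fix \<P> assume \<P>: "finite \<P>" "disjoint \<P>" "\<P> \<subseteq> sets M1" "A = \<Union>\<P>"
    have "(\<Sum>B\<in>\<P>. ennreal \<bar>measure M1 B - measure M2 B\<bar>) \<le> (\<Sum>B\<in>\<P>. emeasure \<nu> B)"
      using \<P>(3) sets_eq by (intro sum_mono bound) auto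
    also have "\<dots> = emeasure \<nu> (\<Union>\<P>)"
      using sum_emeasure[of id \<P> \<nu>] \<P> sets_eq by (auto simp: disjoint_family_on_def disjoint_def)
    finally show "(\<Sum>B\<in>\<P>. ennreal \<bar>measure M1 B - measure M2 B\<bar>) \<le> emeasure \<nu> (\<Union>\<P>)" .
  qed
  have "emeasure (tv_measure M1 M2) A \<le> emeasure \<nu> A" for A
  proof (cases "A \<in> sets \<nu>")
    case True
    then show ?thesis
      using \<mu>_le[OF True] unfolding tv emeasure_measure_of_conv by auto
  next
    case False
    then show ?thesis
      using sets_tv by (simp add: emeasure_notin_sets)
  qed
  then have "tv_measure M1 M2 \<le> \<nu>"
    using sets_tv sets_eq_imp_space_eq[OF sets_tv] unfolding le_measure_iff by (auto simp: le_fun_def)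
  then show ?thesis
    by (rule nn_integral_mono_measure[OF sets_tv])
qed

lemma measurable_shift_noise:
  fixes c :: "'i \<Rightarrow> 'a::euclidean_space"
  assumes "sets N = sets borel" "c \<in> borel_measurable M"
  shows "(\<lambda>(i, \<xi>). c i + \<eta> *\<^sub>R \<xi>) \<in> borel_measurable (M \<Otimes>\<^sub>M N)"
proof -
  have "snd \<in> borel_measurable (M \<Otimes>\<^sub>M N)"
    using measurable_snd[of M N] unfolding measurable_cong_sets[OF refl assms(1)] .
  then show ?thesis
    using assms(2) unfolding case_prod_beta
    by (intro borel_measurable_add borel_measurable_scaleR measurable_compose[OF measurable_fst]) auto
qed

lemma nn_integral_distr_shift_noise:
  fixes c :: "'i \<Rightarrow> 'a::euclidean_space"
  assumes N: "sigma_finite_measure N" "sets N = sets borel"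
    and c: "c \<in> borel_measurable M" and h: "h \<in> borel_measurable borel"
  shows "(\<integral>\<^sup>+t. h t \<partial>distr (M \<Otimes>\<^sub>M N) borel (\<lambda>(i, \<xi>). c i + \<eta> *\<^sub>R \<xi>))
       = (\<integral>\<^sup>+i. \<integral>\<^sup>+\<xi>. h (c i + \<eta> *\<^sub>R \<xi>) \<partial>N \<partial>M)"
proof -
  interpret N: sigma_finite_measure N by fact
  have meas: "(\<lambda>(i, \<xi>). c i + \<eta> *\<^sub>R \<xi>) \<in> borel_measurable (M \<Otimes>\<^sub>M N)"
    using N(2) c by (rule measurable_shift_noise)
  have "(\<integral>\<^sup>+t. h t \<partial>distr (M \<Otimes>\<^sub>M N) borel (\<lambda>(i, \<xi>). c i + \<eta> *\<^sub>R \<xi>))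
      = (\<integral>\<^sup>+x. h (case x of (i, \<xi>) \<Rightarrow> c i + \<eta> *\<^sub>R \<xi>) \<partial>(M \<Otimes>\<^sub>M N))"
    by (rule nn_integral_distr[OF meas]) (use h in simp)
  also have "\<dots> = (\<integral>\<^sup>+i. \<integral>\<^sup>+\<xi>. h (c i + \<eta> *\<^sub>R \<xi>) \<partial>N \<partial>M)"
    using N.nn_integral_fst[OF measurable_compose[OF meas h]] by simp
  finally show ?thesis .
qed

lemma emeasure_distr_shift_noise:
  fixes c :: "'i \<Rightarrow> 'a::euclidean_space"
  assumes N: "sigma_finite_measure N" "sets N = sets borel"
    and c: "c \<in> borel_measurable M" and B: "B \<in> sets borel"
  shows "emeasure (distr (M \<Otimes>\<^sub>M N) borel (\<lambda>(i, \<xi>). c i + \<eta> *\<^sub>R \<xi>)) B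
       = (\<integral>\<^sup>+i. emeasure N {\<xi>. c i + \<eta> *\<^sub>R \<xi> \<in> B} \<partial>M)"
proof -
  have space_N: "space N = UNIV"
    using sets_eq_imp_space_eq[OF N(2)] by simp
  have "{\<xi>. c i + \<eta> *\<^sub>R \<xi> \<in> B} \<in> sets N" for i
    using measurable_sets[of "\<lambda>\<xi>. c i + \<eta> *\<^sub>R \<xi>" N borel B] B N(2)
    by (simp add: space_N measurable_cong_sets[OF N(2) refl])
  then show ?thesis
    using nn_integral_distr_shift_noise[OF N c borel_measurable_indicator[OF B], of \<eta>] B
    by (simp add: indicator_def of_bool_def flip: nn_integral_indicator)
qed

definition shift_mixture :: "'i set \<Rightarrow> ('i \<Rightarrow> 'a::euclidean_space) \<Rightarrow> real \<Rightarrow> 'a measure \<Rightarrow> 'a measure" where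
  "shift_mixture I c \<eta> N = distr (measure_pmf (pmf_of_set I) \<Otimes>\<^sub>M N) borel (\<lambda>(i, \<xi>). c i + \<eta> *\<^sub>R \<xi>)"

lemma sets_shift_mixture [simp]: "sets (shift_mixture I c \<eta> N) = sets borel"
  by (simp add: shift_mixture_def)

lemma measure_shift_mixture:
  fixes c :: "'i \<Rightarrow> 'a::euclidean_space"
  assumes N: "prob_space N" "sets N = sets borel" and I: "finite I" "I \<noteq> {}"
    and B: "B \<in> sets borel"
  shows "measure (shift_mixture I c \<eta> N) B = (\<Sum>i\<in>I. measure N {\<xi>. c i + \<eta> *\<^sub>R \<xi> \<in> B}) / card I"
proof -
  interpret N: prob_space N by fact
  have "emeasure (shift_mixture I c \<eta> N) B
      = (\<Sum>i\<in>I. ennreal (measure N {\<xi>. c i + \<eta> *\<^sub>R \<xi> \<in> B})) / card I"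
    unfolding shift_mixture_def
    using emeasure_distr_shift_noise[OF N.sigma_finite_measure N(2) _ B, of c "measure_pmf (pmf_of_set I)" \<eta>] I
    by (simp add: nn_integral_pmf_of_set N.emeasure_eq_measure)
  also have "\<dots> = ennreal ((\<Sum>i\<in>I. measure N {\<xi>. c i + \<eta> *\<^sub>R \<xi> \<in> B}) / card I)"
    using I by (simp add: ennreal_of_nat_eq_real_of_nat divide_ennreal sum_nonneg card_gt_0_iff)
  finally show ?thesis
    by (simp add: measure_def sum_nonneg)
qed

lemma abs_measure_shift_mixture_diff_le:
  fixes c c' :: "'i \<Rightarrow> 'a::euclidean_space"
  assumes N: "prob_space N" "sets N = sets borel" and I: "finite I" "I \<noteq> {}" and J: "J \<subseteq> I"
    and agree: "\<And>i. i \<in> I - J \<Longrightarrow> c i = c' i" and B: "B \<in> sets borel"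
  shows "\<bar>measure (shift_mixture I c \<eta> N) B - measure (shift_mixture I c' \<eta> N) B\<bar>
     \<le> (\<Sum>i\<in>J. measure N {\<xi>. c i + \<eta> *\<^sub>R \<xi> \<in> B} + measure N {\<xi>. c' i + \<eta> *\<^sub>R \<xi> \<in> B}) / card I"
proof -
  define q where "q a = measure N {\<xi>. a + \<eta> *\<^sub>R \<xi> \<in> B}" for a
  have card_pos: "real (card I) > 0"
    using I by (simp add: card_gt_0_iff)
  have "measure (shift_mixture I c \<eta> N) B - measure (shift_mixture I c' \<eta> N) B
      = (\<Sum>i\<in>I. q (c i) - q (c' i)) / card I"
    unfolding measure_shift_mixture[OF N I B] q_def by (simp add: sum_subtractf diff_divide_distrib)
  also have "\<dots> = (\<Sum>i\<in>J. q (c i) - q (c' i)) / card I"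
    using agree by (subst sum.mono_neutral_right[OF I(1) J]) auto
  finally have "\<bar>measure (shift_mixture I c \<eta> N) B - measure (shift_mixture I c' \<eta> N) B\<bar>
      \<le> (\<Sum>i\<in>J. \<bar>q (c i) - q (c' i)\<bar>) / card I"
    using card_pos by (simp add: divide_right_mono sum_abs)
  also have "\<dots> \<le> (\<Sum>i\<in>J. q (c i) + q (c' i)) / card I"
  proof (intro divide_right_mono sum_mono)
    fix i
    show "\<bar>q (c i) - q (c' i)\<bar> \<le> q (c i) + q (c' i)"
      using measure_nonneg[of N "{\<xi>. c i + \<eta> *\<^sub>R \<xi> \<in> B}"] measure_nonneg[of N "{\<xi>. c' i + \<eta> *\<^sub>R \<xi> \<in> B}"]
      unfolding q_def by linarith
  qed (use card_pos in simp)
  finally show ?thesis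
    unfolding q_def .
qed

lemma nn_integral_tv_shift_mixture_le:
  fixes c c' :: "'i \<Rightarrow> 'a::euclidean_space"
  assumes N: "prob_space N" "sets N = sets borel" and I: "finite I" "I \<noteq> {}" and J: "J \<subseteq> I"
    and agree: "\<And>i. i \<in> I - J \<Longrightarrow> c i = c' i" and h: "h \<in> borel_measurable borel"
  shows "(\<integral>\<^sup>+t. h t \<partial>tv_measure (shift_mixture I c \<eta> N) (shift_mixture I c' \<eta> N))
     \<le> (\<Sum>i\<in>J. (\<integral>\<^sup>+\<xi>. h (c i + \<eta> *\<^sub>R \<xi>) \<partial>N) + (\<integral>\<^sup>+\<xi>. h (c' i + \<eta> *\<^sub>R \<xi>) \<partial>N)) / card I"
proof -
  interpret N: prob_space N by fact
  define C :: "'i \<times> bool \<Rightarrow> 'a" where "C = (\<lambda>(i, s). if s then c i else c' i)"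
  define \<nu> where "\<nu> = scale_measure (1 / of_nat (card I))
      (distr (count_space (J \<times> UNIV) \<Otimes>\<^sub>M N) borel (\<lambda>(j, \<xi>). C j + \<eta> *\<^sub>R \<xi>))"
  have fin: "finite (J \<times> (UNIV :: bool set))"
    using finite_subset[OF J I(1)] by simp
  have sum_C: "(\<Sum>j\<in>J \<times> UNIV. f (C j)) = (\<Sum>i\<in>J. f (c i) + f (c' i))" for f :: "'a \<Rightarrow> 'b::comm_monoid_add"
  proof -
    have "(\<Sum>j\<in>J \<times> UNIV. f (C j)) = (\<Sum>i\<in>J. \<Sum>s\<in>UNIV. f (C (i, s)))"
      by (simp add: sum.cartesian_product)
    then show ?thesis
      by (simp add: UNIV_bool C_def add.commute)
  qed
  have "ennreal \<bar>measure (shift_mixture I c \<eta> N) B - measure (shift_mixture I c' \<eta> N) B\<bar> \<le> emeasure \<nu> B"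
    if "B \<in> sets \<nu>" for B
  proof -
    have B: "B \<in> sets borel"
      using that by (simp add: \<nu>_def)
    have "real (card I) > 0"
      using I by (simp add: card_gt_0_iff)
    then have "ennreal ((\<Sum>i\<in>J. measure N {\<xi>. c i + \<eta> *\<^sub>R \<xi> \<in> B} + measure N {\<xi>. c' i + \<eta> *\<^sub>R \<xi> \<in> B}) / card I)
        = (\<Sum>i\<in>J. emeasure N {\<xi>. c i + \<eta> *\<^sub>R \<xi> \<in> B} + emeasure N {\<xi>. c' i + \<eta> *\<^sub>R \<xi> \<in> B}) / of_nat (card I)"
      by (simp add: N.emeasure_eq_measure sum_nonneg ennreal_of_nat_eq_real_of_nat
          flip: divide_ennreal sum_ennreal ennreal_plus)
    also have "\<dots> = (\<Sum>j\<in>J \<times> UNIV. emeasure N {\<xi>. C j + \<eta> *\<^sub>R \<xi> \<in> B}) / of_nat (card I)"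
      by (simp only: sum_C[of "\<lambda>a. emeasure N {\<xi>. a + \<eta> *\<^sub>R \<xi> \<in> B}"])
    also have "\<dots> = emeasure \<nu> B"
      unfolding \<nu>_def
      using emeasure_distr_shift_noise[OF N.sigma_finite_measure N(2) _ B, of C "count_space (J \<times> UNIV)" \<eta>]
      by (simp add: fin nn_integral_count_space_finite divide_ennreal_def mult.commute)
    finally show ?thesis
      using ennreal_leI[OF abs_measure_shift_mixture_diff_le[where c = c and c' = c' and \<eta> = \<eta>, OF N I J agree B]]
      by simp
  qed
  then have "(\<integral>\<^sup>+t. h t \<partial>tv_measure (shift_mixture I c \<eta> N) (shift_mixture I c' \<eta> N))
      \<le> (\<integral>\<^sup>+t. h t \<partial>\<nu>)"
    by (intro nn_integral_tv_measure_le) (simp_all add: \<nu>_def)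
  also have "\<dots> = (\<Sum>i\<in>J. (\<integral>\<^sup>+\<xi>. h (c i + \<eta> *\<^sub>R \<xi>) \<partial>N) + (\<integral>\<^sup>+\<xi>. h (c' i + \<eta> *\<^sub>R \<xi>) \<partial>N)) / card I"
    unfolding \<nu>_def
    using nn_integral_distr_shift_noise[OF N.sigma_finite_measure N(2) _ h, of C "count_space (J \<times> UNIV)" \<eta>]
    by (simp add: nn_integral_scale_measure h nn_integral_count_space_finite[OF fin]
        sum_C[of "\<lambda>a. \<integral>\<^sup>+\<xi>. h (a + \<eta> *\<^sub>R \<xi>) \<partial>N"] divide_ennreal_def mult.commute)
  finally show ?thesis .
qed

section \<open>Norm and moment estimates\<close>

lemma power2_norm_add_le: "(norm (x + y))\<^sup>2 \<le> 2 * (norm x)\<^sup>2 + 2 * (norm y)\<^sup>2"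
  for x y :: "'a::real_normed_vector"
proof -
  have "(norm (x + y))\<^sup>2 \<le> (norm x + norm y)\<^sup>2"
    by (simp add: norm_triangle_ineq power_mono)
  also have "\<dots> \<le> 2 * (norm x)\<^sup>2 + 2 * (norm y)\<^sup>2"
    using zero_le_power2[of "norm x - norm y"] unfolding power2_sum power2_diff by linarith
  finally show ?thesis .
qed

lemma power2_norm_diff_le: "(norm (x - y))\<^sup>2 \<le> 2 * (norm x)\<^sup>2 + 2 * (norm y)\<^sup>2"
  for x y :: "'a::real_normed_vector"
  using power2_norm_add_le[of x "- y"] by simp

lemma norm_average_le:
  fixes v :: "'i \<Rightarrow> 'a::real_normed_vector"
  assumes "finite S" "S \<noteq> {}" "\<And>i. i \<in> S \<Longrightarrow> norm (v i) \<le> r"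
  shows "norm ((1 / card S) *\<^sub>R (\<Sum>i\<in>S. v i)) \<le> r"
proof -
  have "norm (\<Sum>i\<in>S. v i) \<le> (\<Sum>i\<in>S. norm (v i))"
    by (rule norm_sum)
  also have "\<dots> \<le> card S * r"
    using sum_mono[of S "\<lambda>i. norm (v i)" "\<lambda>_. r"] assms(3) by simp
  finally show ?thesis
    using assms(1,2) by (simp add: card_gt_0_iff field_simps)
qed

lemma power2_norm_sgd_step_le:
  fixes g gs :: "'i \<Rightarrow> 'a::real_normed_vector"
  assumes S: "finite S" "S \<noteq> {}"
    and lipschitz: "\<And>i. i \<in> S \<Longrightarrow> norm (g i - gs i) \<le> K * norm (\<theta> - \<theta>s)"
    and bounded: "\<And>i. i \<in> S \<Longrightarrow> (norm (gs i))\<^sup>2 \<le> M"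
  shows "(norm (\<theta> - (\<eta> / card S) *\<^sub>R (\<Sum>i\<in>S. g i) - \<theta>s))\<^sup>2
      \<le> (2 + 4 * \<eta>\<^sup>2 * K\<^sup>2) * (norm (\<theta> - \<theta>s))\<^sup>2 + 4 * \<eta>\<^sup>2 * M"
proof -
  define avg where "avg w = (1 / card S) *\<^sub>R (\<Sum>i\<in>S. w i)" for w :: "'i \<Rightarrow> 'a"
  obtain i0 where "i0 \<in> S"
    using S(2) by blast
  then have M_nonneg: "0 \<le> M"
    using bounded by (meson order_trans zero_le_power2)
  have "norm (avg g - avg gs) \<le> K * norm (\<theta> - \<theta>s)"
    using norm_average_le[OF S lipschitz]
    by (simp add: avg_def sum_subtractf scaleR_diff_right)
  then have diff: "(norm (avg g - avg gs))\<^sup>2 \<le> K\<^sup>2 * (norm (\<theta> - \<theta>s))\<^sup>2"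
    by (metis norm_ge_zero power_mono power_mult_distrib)
  have "norm (avg gs) \<le> sqrt M"
    unfolding avg_def by (rule norm_average_le[OF S]) (use bounded in \<open>simp add: real_le_rsqrt\<close>)
  then have base: "(norm (avg gs))\<^sup>2 \<le> M"
    using M_nonneg by (metis norm_ge_zero power_mono real_sqrt_pow2)
  have "(norm (avg g))\<^sup>2 \<le> 2 * K\<^sup>2 * (norm (\<theta> - \<theta>s))\<^sup>2 + 2 * M"
    using power2_norm_add_le[of "avg g - avg gs" "avg gs"] diff base by simp
  then have "\<eta>\<^sup>2 * (norm (avg g))\<^sup>2 \<le> \<eta>\<^sup>2 * (2 * K\<^sup>2 * (norm (\<theta> - \<theta>s))\<^sup>2 + 2 * M)"
    by (simp add: mult_left_mono)
  then have "(norm (\<theta> - \<theta>s - \<eta> *\<^sub>R avg g))\<^sup>2 \<le> 2 * (norm (\<theta> - \<theta>s))\<^sup>2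
      + 2 * (\<eta>\<^sup>2 * (2 * K\<^sup>2 * (norm (\<theta> - \<theta>s))\<^sup>2 + 2 * M))"
    using power2_norm_diff_le[of "\<theta> - \<theta>s" "\<eta> *\<^sub>R avg g"] by (simp add: power_mult_distrib)
  moreover have "\<theta> - (\<eta> / card S) *\<^sub>R (\<Sum>i\<in>S. g i) - \<theta>s = \<theta> - \<theta>s - \<eta> *\<^sub>R avg g"
    by (simp add: avg_def algebra_simps)
  ultimately show ?thesis
    by (simp add: algebra_simps)
qed

lemma bdd_above_power2_norm_lipschitz_image:
  fixes F :: "'b::real_normed_vector \<Rightarrow> 'a::real_normed_vector"
  assumes lipschitz: "\<And>x x'. x \<in> \<X> \<Longrightarrow> x' \<in> \<X> \<Longrightarrow> norm (F x - F x') \<le> L * norm (x - x')"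
    and bounded: "\<forall>x\<in>\<X>. norm x \<le> D"
  shows "bdd_above ((\<lambda>x. (norm (F x))\<^sup>2) ` \<X>)"
proof (cases "\<X> = {}")
  case False
  then obtain x0 where x0: "x0 \<in> \<X>"
    by blast
  have "norm (F x) \<le> norm (F x0) + \<bar>L\<bar> * (2 * D)" if x: "x \<in> \<X>" for x
  proof -
    have "norm (x - x0) \<le> 2 * D"
      using norm_triangle_ineq4[of x x0] bspec[OF bounded x] bspec[OF bounded x0] by linarith
    then have "norm (F x - F x0) \<le> \<bar>L\<bar> * (2 * D)"
      using lipschitz[OF x x0] by (smt (verit) abs_ge_self mult_left_mono mult_right_mono norm_ge_zero)
    then show ?thesis
      using norm_triangle_ineq2[of "F x" "F x0"] by linarith
  qed
  then have "(norm (F x))\<^sup>2 \<le> (norm (F x0) + \<bar>L\<bar> * (2 * D))\<^sup>2" if "x \<in> \<X>" for x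
    using that by (intro power_mono) auto
  then show ?thesis
    by (intro bdd_aboveI) auto
qed simp

lemma integral_power2_norm_shift:
  fixes a :: "'a::euclidean_space"
  assumes "prob_space M" "integrable M (\<lambda>t. t)" "(\<integral>t. t \<partial>M) = 0" "integrable M (\<lambda>t. (norm t)\<^sup>2)"
  shows "integrable M (\<lambda>\<xi>. (norm (a + \<eta> *\<^sub>R \<xi>))\<^sup>2)"
    and "(\<integral>\<xi>. (norm (a + \<eta> *\<^sub>R \<xi>))\<^sup>2 \<partial>M) = (norm a)\<^sup>2 + \<eta>\<^sup>2 * (\<integral>t. (norm t)\<^sup>2 \<partial>M)"
proof -
  interpret prob_space M by fact
  have expand: "(norm (a + \<eta> *\<^sub>R \<xi>))\<^sup>2 = (norm a)\<^sup>2 + (2 * \<eta>) * (a \<bullet> \<xi>) + \<eta>\<^sup>2 * (norm \<xi>)\<^sup>2" for \<xi>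
    using dot_norm[of a "\<eta> *\<^sub>R \<xi>"] by (simp add: power_mult_distrib)
  show "integrable M (\<lambda>\<xi>. (norm (a + \<eta> *\<^sub>R \<xi>))\<^sup>2)"
    unfolding expand using assms(2,4) by auto
  show "(\<integral>\<xi>. (norm (a + \<eta> *\<^sub>R \<xi>))\<^sup>2 \<partial>M) = (norm a)\<^sup>2 + \<eta>\<^sup>2 * (\<integral>t. (norm t)\<^sup>2 \<partial>M)"
    unfolding expand using assms(2-4) by (simp add: prob_space)
qed

lemma nn_integral_weight_shift:
  fixes a :: "'a::euclidean_space"
  assumes "prob_space M" "integrable M (\<lambda>t. t)" "(\<integral>t. t \<partial>M) = 0" "integrable M (\<lambda>t. (norm t)\<^sup>2)"
    and "\<psi> \<ge> 0"
  shows "(\<integral>\<^sup>+\<xi>. ennreal (1 + \<psi> * (1 + (norm (a + \<eta> *\<^sub>R \<xi>))\<^sup>2)) \<partial>M)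
       = ennreal (1 + \<psi> * (1 + (norm a)\<^sup>2 + \<eta>\<^sup>2 * (\<integral>t. (norm t)\<^sup>2 \<partial>M)))"
proof -
  interpret prob_space M by fact
  have weight: "1 + \<psi> * (1 + (norm (a + \<eta> *\<^sub>R \<xi>))\<^sup>2) = (1 + \<psi>) + \<psi> * (norm (a + \<eta> *\<^sub>R \<xi>))\<^sup>2" for \<xi>
    by (simp add: algebra_simps)
  show ?thesis
    unfolding weight using integral_power2_norm_shift[OF assms(1-4), of a \<eta>] assms(5)
    by (subst nn_integral_eq_integral) (auto simp: prob_space algebra_simps)
qed

section \<open>Counting minibatches\<close>

lemma card_subsets_containing:
  assumes "finite A" "a \<in> A" "1 \<le> k"
  shows "card {S. S \<subseteq> A \<and> card S = k \<and> a \<in> S} * card A = k * (card A choose k)"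
proof -
  have "{S. S \<subseteq> A \<and> card S = k \<and> a \<in> S} = insert a ` {S. S \<subseteq> A - {a} \<and> card S = k - 1}"
  proof (intro set_eqI iffI)
    fix S assume "S \<in> {S. S \<subseteq> A \<and> card S = k \<and> a \<in> S}"
    moreover from this have "finite S"
      using assms(1) finite_subset by blast
    ultimately show "S \<in> insert a ` {S. S \<subseteq> A - {a} \<and> card S = k - 1}"
      by (intro image_eqI[where x = "S - {a}"]) auto
  next
    fix S assume "S \<in> insert a ` {S. S \<subseteq> A - {a} \<and> card S = k - 1}"
    then obtain T where "S = insert a T" "T \<subseteq> A - {a}" "card T = k - 1"
      by blast
    moreover have "finite T" "a \<notin> T"
      using \<open>T \<subseteq> A - {a}\<close> assms(1) finite_subset by blast+
    ultimately show "S \<in> {S. S \<subseteq> A \<and> card S = k \<and> a \<in> S}"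
      using assms by auto
  qed
  moreover have "inj_on (insert a) {S. S \<subseteq> A - {a} \<and> card S = k - 1}"
    by (rule inj_onI) (metis Diff_insert_absorb mem_Collect_eq subset_Diff_insert)
  ultimately have "card {S. S \<subseteq> A \<and> card S = k \<and> a \<in> S} = (card A - 1) choose (k - 1)"
    using n_subsets[of "A - {a}" "k - 1"] assms(1,2) by (simp add: card_image)
  then show ?thesis
    using times_binomial_minus1_eq[of k "card A"] assms(3) by simp
qed

lemma card_subsets_meeting_ratio_le:
  assumes "finite A" "C \<subseteq> A" "card C \<le> 1" "1 \<le> k" "k \<le> card A"
  shows "real (card {S. S \<subseteq> A \<and> card S = k \<and> S \<inter> C \<noteq> {}}) / real (card {S. S \<subseteq> A \<and> card S = k})
      \<le> real k / real (card A)"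
proof -
  have "card {S. S \<subseteq> A \<and> card S = k \<and> S \<inter> C \<noteq> {}} * card A \<le> k * (card A choose k)"
  proof (cases "C = {}")
    case False
    then have "card C = 1"
      using assms(3) finite_subset[OF assms(2,1)] by (simp add: le_antisym Suc_leI card_gt_0_iff)
    then obtain a where "C = {a}"
      by (rule card_1_singletonE)
    then show ?thesis
      using card_subsets_containing[OF assms(1) _ assms(4), of a] assms(2) by simp
  qed simp
  moreover have "0 < card A choose k" "0 < card A"
    using assms(4,5) by (simp_all add: zero_less_binomial)
  ultimately show ?thesis
    using n_subsets[OF assms(1), of k] by (simp add: divide_simps flip: of_nat_mult)
qed

section \<open>The noisy minibatch SGD kernel\<close>

lemma nn_integral_weight_sgd_step_le:
  fixes g gs :: "'i \<Rightarrow> 'a::euclidean_space"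
  assumes N: "prob_space N" "integrable N (\<lambda>t. t)" "(\<integral>t. t \<partial>N) = 0" "integrable N (\<lambda>t. (norm t)\<^sup>2)"
    and S: "finite S" "S \<noteq> {}"
    and lipschitz: "\<And>i. i \<in> S \<Longrightarrow> norm (g i - gs i) \<le> K * norm (\<theta> - \<theta>s)"
    and bounded: "\<And>i. i \<in> S \<Longrightarrow> (norm (gs i))\<^sup>2 \<le> M"
    and \<psi>: "\<psi> \<ge> 0"
  shows "(\<integral>\<^sup>+\<xi>. ennreal (1 + \<psi> * (1 + (norm (\<theta> - (\<eta> / card S) *\<^sub>R (\<Sum>i\<in>S. g i) + \<eta> *\<^sub>R \<xi> - \<theta>s))\<^sup>2)) \<partial>N)
      \<le> ennreal (max (\<psi> * (4 + 8 * \<eta>\<^sup>2 * K\<^sup>2))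
                  (1 + \<psi> * (1 + \<eta>\<^sup>2 * (\<integral>t. (norm t)\<^sup>2 \<partial>N)
                     + (4 + 8 * \<eta>\<^sup>2 * K\<^sup>2) * (norm (\<theta>s - \<theta>h))\<^sup>2 + 4 * \<eta>\<^sup>2 * M))
               * (1 + (norm (\<theta> - \<theta>h))\<^sup>2))"
    (is "_ \<le> ennreal (max ?A ?B * _)")
proof -
  define a where "a = \<theta> - (\<eta> / card S) *\<^sub>R (\<Sum>i\<in>S. g i) - \<theta>s"
  define C where "C = 4 + 8 * \<eta>\<^sup>2 * K\<^sup>2"
  have "(norm (\<theta> - \<theta>s))\<^sup>2 \<le> 2 * (norm (\<theta> - \<theta>h))\<^sup>2 + 2 * (norm (\<theta>s - \<theta>h))\<^sup>2"
    using power2_norm_diff_le[of "\<theta> - \<theta>h" "\<theta>s - \<theta>h"] by simp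
  then have "(2 + 4 * \<eta>\<^sup>2 * K\<^sup>2) * (norm (\<theta> - \<theta>s))\<^sup>2
      \<le> (2 + 4 * \<eta>\<^sup>2 * K\<^sup>2) * (2 * (norm (\<theta> - \<theta>h))\<^sup>2 + 2 * (norm (\<theta>s - \<theta>h))\<^sup>2)"
    by (rule mult_left_mono) simp
  also have "\<dots> = C * (norm (\<theta> - \<theta>h))\<^sup>2 + C * (norm (\<theta>s - \<theta>h))\<^sup>2"
    by (simp add: C_def algebra_simps)
  finally have "(norm a)\<^sup>2 \<le> C * (norm (\<theta> - \<theta>h))\<^sup>2 + C * (norm (\<theta>s - \<theta>h))\<^sup>2 + 4 * \<eta>\<^sup>2 * M"
    using power2_norm_sgd_step_le[where g = g and gs = gs, OF S lipschitz bounded, where \<eta> = \<eta>]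
    unfolding a_def by linarith
  then have "\<psi> * (norm a)\<^sup>2 \<le> \<psi> * (C * (norm (\<theta> - \<theta>h))\<^sup>2 + C * (norm (\<theta>s - \<theta>h))\<^sup>2 + 4 * \<eta>\<^sup>2 * M)"
    by (rule mult_left_mono) (rule \<psi>)
  then have "1 + \<psi> * (1 + (norm a)\<^sup>2 + \<eta>\<^sup>2 * (\<integral>t. (norm t)\<^sup>2 \<partial>N)) \<le> ?B + ?A * (norm (\<theta> - \<theta>h))\<^sup>2"
    by (simp add: C_def algebra_simps)
  also have "\<dots> \<le> max ?A ?B * (1 + (norm (\<theta> - \<theta>h))\<^sup>2)"
    by (simp add: distrib_left add_mono mult_right_mono)
  finally show ?thesis
    using nn_integral_weight_shift[OF N \<psi>, of a \<eta>]
    by (simp add: a_def algebra_simps ennreal_leI)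
qed

lemma sgld_kernel_eq_shift_mixture:
  "sgld_kernel n b \<eta> G X N \<theta>
     = shift_mixture {S. S \<subseteq> {1..n} \<and> card S = b} (\<lambda>S. \<theta> - (\<eta> / real b) *\<^sub>R (\<Sum>i\<in>S. G \<theta> (X i))) \<eta> N"
  by (simp add: sgld_kernel_def shift_mixture_def minibatch_pmf_def)

lemma d_psi_sgld_kernel_le:
  fixes G :: "'a::euclidean_space \<Rightarrow> 'b \<Rightarrow> 'a" and X X' :: "nat \<Rightarrow> 'b"
  assumes N: "prob_space N" "sets N = sets borel" "integrable N (\<lambda>t. t)" "(\<integral>t. t \<partial>N) = 0"
      "integrable N (\<lambda>t. (norm t)\<^sup>2)"
    and lipschitz: "\<And>\<theta> \<theta>' x. x \<in> \<X> \<Longrightarrow> norm (G \<theta> x - G \<theta>' x) \<le> K * norm (\<theta> - \<theta>')"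
    and bounded: "\<And>x. x \<in> \<X> \<Longrightarrow> (norm (G \<theta>s x))\<^sup>2 \<le> M"
    and X: "\<And>i. i \<in> {1..n} \<Longrightarrow> X i \<in> \<X>" and X': "\<And>i. i \<in> {1..n} \<Longrightarrow> X' i \<in> \<X>"
    and differ: "card {i\<in>{1..n}. X i \<noteq> X' i} \<le> 1"
    and b: "1 \<le> b" "b \<le> n" and \<psi>: "\<psi> \<ge> 0"
  shows "d_psi \<psi> (\<lambda>t. 1 + (norm (t - \<theta>s))\<^sup>2) (sgld_kernel n b \<eta> G X N \<theta>) (sgld_kernel n b \<eta> G X' N \<theta>)
      \<le> ennreal (2 * real b / real n *
           max (\<psi> * (4 + 8 * \<eta>\<^sup>2 * K\<^sup>2))
               (1 + \<psi> * (1 + \<eta>\<^sup>2 * (\<integral>t. (norm t)\<^sup>2 \<partial>N)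
                  + (4 + 8 * \<eta>\<^sup>2 * K\<^sup>2) * (norm (\<theta>s - \<theta>h))\<^sup>2 + 4 * \<eta>\<^sup>2 * M))
           * (1 + (norm (\<theta> - \<theta>h))\<^sup>2))"
    (is "_ \<le> ennreal (2 * real b / real n * ?m * ?V)")
proof -
  define SS where "SS = {S. S \<subseteq> {1..n} \<and> card S = b}"
  define TT where "TT = {S. S \<subseteq> {1..n} \<and> card S = b \<and> S \<inter> {i\<in>{1..n}. X i \<noteq> X' i} \<noteq> {}}"
  define step :: "(nat \<Rightarrow> 'b) \<Rightarrow> nat set \<Rightarrow> 'a" where "step Y S = \<theta> - (\<eta> / real b) *\<^sub>R (\<Sum>i\<in>S. G \<theta> (Y i))" for Y S
  define w where "w a = (\<integral>\<^sup>+\<xi>. ennreal (1 + \<psi> * (1 + (norm (a + \<eta> *\<^sub>R \<xi> - \<theta>s))\<^sup>2)) \<partial>N)" for a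
  have SS: "finite SS" "SS \<noteq> {}"
    using b finite_subset[of _ "Pow {1..n}"]
    by (auto simp: SS_def intro!: exI[of _ "{1..b}"])
  have TT: "TT \<subseteq> SS" "finite TT"
    using SS(1) finite_subset by (auto simp: SS_def TT_def)
  have w_le: "w (step Y S) \<le> ennreal (?m * ?V)" if "S \<in> TT" "Y \<in> {X, X'}" for S Y
  proof -
    have "finite S" "card S = b" "\<And>i. i \<in> S \<Longrightarrow> Y i \<in> \<X>"
      using that X X' finite_subset[of S "{1..n}"] by (auto simp: TT_def)
    moreover from this have "S \<noteq> {}"
      using b(1) by auto
    ultimately have "w (step Y S) = (\<integral>\<^sup>+\<xi>. ennreal (1 + \<psi> * (1 +
        (norm (\<theta> - (\<eta> / card S) *\<^sub>R (\<Sum>i\<in>S. G \<theta> (Y i)) + \<eta> *\<^sub>R \<xi> - \<theta>s))\<^sup>2)) \<partial>N)"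
      by (simp add: w_def step_def)
    also have "\<dots> \<le> ennreal (?m * ?V)"
      by (rule nn_integral_weight_sgd_step_le[OF N(1,3-5) \<open>finite S\<close> \<open>S \<noteq> {}\<close> _ _ \<psi>,
            where gs = "\<lambda>i. G \<theta>s (Y i)"])
        (use lipschitz bounded \<open>\<And>i. i \<in> S \<Longrightarrow> Y i \<in> \<X>\<close> in auto)
    finally show ?thesis .
  qed
  have agree: "step X S = step X' S" if "S \<in> SS - TT" for S
  proof -
    have "X i = X' i" if "i \<in> S" for i
      using \<open>S \<in> SS - TT\<close> that unfolding SS_def TT_def by blast
    then show ?thesis
      unfolding step_def by simp
  qed
  have kernel: "sgld_kernel n b \<eta> G Y N \<theta> = shift_mixture SS (step Y) \<eta> N" for Y
    by (simp add: sgld_kernel_eq_shift_mixture SS_def step_def[abs_def])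
  have "d_psi \<psi> (\<lambda>t. 1 + (norm (t - \<theta>s))\<^sup>2) (sgld_kernel n b \<eta> G X N \<theta>) (sgld_kernel n b \<eta> G X' N \<theta>)
      \<le> (\<Sum>S\<in>TT. w (step X S) + w (step X' S)) / card SS"
    unfolding d_psi_def kernel w_def
    by (rule nn_integral_tv_shift_mixture_le[OF N(1,2) SS(1,2) TT(1) agree,
          where h = "\<lambda>t. ennreal (1 + \<psi> * (1 + (norm (t - \<theta>s))\<^sup>2))"]) measurable
  also have "\<dots> \<le> (\<Sum>S\<in>TT. ennreal (?m * ?V) + ennreal (?m * ?V)) / card SS"
    by (intro divide_right_mono_ennreal sum_mono add_mono w_le) simp_all
  also have "\<dots> = ennreal (2 * (real (card TT) / card SS) * ?m * ?V)"
    using \<psi> SS(1,2)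
    by (simp add: le_max_iff_disj card_gt_0_iff ennreal_of_nat_eq_real_of_nat divide_ennreal
        ennreal_mult'' [symmetric] flip: ennreal_plus)
  also have "\<dots> \<le> ennreal (2 * real b / real n * ?m * ?V)"
    using card_subsets_meeting_ratio_le[OF finite_atLeastAtMost Collect_restrict differ b(1)] b \<psi>
    by (intro ennreal_leI mult_right_mono) (auto simp: SS_def TT_def le_max_iff_disj)
  finally show ?thesis .
qed

lemma ennreal_divide_le_of_le_mult:
  assumes "d \<le> ennreal (c * V)" "0 \<le> c" "0 < V"
  shows "d / ennreal V \<le> ennreal c"
proof -
  have "d / ennreal V \<le> ennreal (c * V) / ennreal V"
    using assms(1) by (rule divide_right_mono_ennreal)
  also have "\<dots> = ennreal c"
    using assms(2,3) by (simp add: ennreal_mult mult_divide_eq_ennreal)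
  finally show ?thesis .
qed

theorem lemmaD4:
  fixes f :: "'a::euclidean_space \<Rightarrow> 'b::euclidean_space \<Rightarrow> real"
    and G :: "'a \<Rightarrow> 'b \<Rightarrow> 'a"
    and \<X> :: "'b set"
    and D K1 K2 \<eta> \<psi> :: real
    and N :: "'a measure" and g :: "'a \<Rightarrow> real"
    and n b :: nat
    and X Xh :: "nat \<Rightarrow> 'b"
    and \<theta>s \<theta>hs :: 'a
  assumes grad: "\<And>\<theta> x. x \<in> \<X> \<Longrightarrow> ((\<lambda>t. f t x) has_derivative (\<lambda>h. G \<theta> x \<bullet> h)) (at \<theta>)"
    and bounded_X: "\<forall>x\<in>\<X>. norm x \<le> D"
    and K1_pos: "K1 > 0" and K2_pos: "K2 > 0"
    and A1: "\<And>\<theta> \<theta>' x x'. x \<in> \<X> \<Longrightarrow> x' \<in> \<X> \<Longrightarrow>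
        norm (G \<theta> x - G \<theta>' x') \<le> K1 * norm (\<theta> - \<theta>') + K2 * norm (x - x') * (norm \<theta> + norm \<theta>' + 1)"
    and N_prob: "prob_space N"
    and N_density: "N = density lborel (\<lambda>t. ennreal (g t))"
    and g_meas: "g \<in> borel_measurable borel"
    and g_cont: "continuous_on UNIV g"
    and g_pos: "\<And>t. g t > 0"
    and N_integrable: "integrable N (\<lambda>t. t)"
    and N_mean: "(\<integral>t. t \<partial>N) = 0"
    and N_second: "integrable N (\<lambda>t. (norm t)\<^sup>2)"
    and X_in: "\<And>i. i \<in> {1..n} \<Longrightarrow> X i \<in> \<X>"
    and Xh_in: "\<And>i. i \<in> {1..n} \<Longrightarrow> Xh i \<in> \<X>"
    and differ: "card {i\<in>{1..n}. X i \<noteq> Xh i} \<le> 1"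
    and b_range: "1 \<le> b" "b \<le> n"
    and eta_pos: "\<eta> > 0"
    and psi_pos: "\<psi> > 0"
    and min_s: "\<And>\<theta>. (\<Sum>i=1..n. f \<theta>s (X i)) / real n \<le> (\<Sum>i=1..n. f \<theta> (X i)) / real n"
    and min_hs: "\<And>\<theta>. (\<Sum>i=1..n. f \<theta>hs (Xh i)) / real n \<le> (\<Sum>i=1..n. f \<theta> (Xh i)) / real n"
  shows "(SUP \<theta>. d_psi \<psi> (\<lambda>t. 1 + (norm (t - \<theta>s))\<^sup>2)
                (sgld_kernel n b \<eta> G X N \<theta>) (sgld_kernel n b \<eta> G Xh N \<theta>)
              / ennreal (1 + (norm (\<theta> - \<theta>hs))\<^sup>2))
         \<le> ennreal (2 * real b / real n *
             max (\<psi> * (4 + 8 * \<eta>\<^sup>2 * K1\<^sup>2))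
                 (1 + \<psi> * (1 + \<eta>\<^sup>2 * (\<integral>t. (norm t)\<^sup>2 \<partial>N)
                      + (4 + 8 * \<eta>\<^sup>2 * K1\<^sup>2) * (norm (\<theta>s - \<theta>hs))\<^sup>2
                      + 4 * \<eta>\<^sup>2 * (SUP x\<in>\<X>. (norm (G \<theta>s x))\<^sup>2))))"
proof -
  have lipschitz: "norm (G \<theta> x - G \<theta>' x) \<le> K1 * norm (\<theta> - \<theta>')" if "x \<in> \<X>" for \<theta> \<theta>' x
    using A1[OF that that, of \<theta> \<theta>'] by simp
  have "bdd_above ((\<lambda>x. (norm (G \<theta>s x))\<^sup>2) ` \<X>)"
    using A1[of _ _ \<theta>s \<theta>s]
    by (intro bdd_above_power2_norm_lipschitz_image[OF _ bounded_X, where L = "K2 * (2 * norm \<theta>s + 1)"])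
      (simp add: algebra_simps)
  then have bounded: "(norm (G \<theta>s x))\<^sup>2 \<le> (SUP x\<in>\<X>. (norm (G \<theta>s x))\<^sup>2)" if "x \<in> \<X>" for x
    using that by (rule cSUP_upper2) simp
  have N_sets: "sets N = sets borel"
    using N_density by simp
  define m where "m = max (\<psi> * (4 + 8 * \<eta>\<^sup>2 * K1\<^sup>2))
    (1 + \<psi> * (1 + \<eta>\<^sup>2 * (\<integral>t. (norm t)\<^sup>2 \<partial>N) + (4 + 8 * \<eta>\<^sup>2 * K1\<^sup>2) * (norm (\<theta>s - \<theta>hs))\<^sup>2
      + 4 * \<eta>\<^sup>2 * (SUP x\<in>\<X>. (norm (G \<theta>s x))\<^sup>2)))"
  have "d_psi \<psi> (\<lambda>t. 1 + (norm (t - \<theta>s))\<^sup>2) (sgld_kernel n b \<eta> G X N \<theta>) (sgld_kernel n b \<eta> G Xh N \<theta>)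
      / ennreal (1 + (norm (\<theta> - \<theta>hs))\<^sup>2) \<le> ennreal (2 * real b / real n * m)" for \<theta>
  proof (rule ennreal_divide_le_of_le_mult)
    show "d_psi \<psi> (\<lambda>t. 1 + (norm (t - \<theta>s))\<^sup>2) (sgld_kernel n b \<eta> G X N \<theta>) (sgld_kernel n b \<eta> G Xh N \<theta>)
        \<le> ennreal (2 * real b / real n * m * (1 + (norm (\<theta> - \<theta>hs))\<^sup>2))"
      unfolding m_def
      by (rule d_psi_sgld_kernel_le[OF N_prob N_sets N_integrable N_mean N_second, where \<X> = \<X>])
        (use lipschitz bounded X_in Xh_in differ b_range psi_pos in auto)
    show "0 \<le> 2 * real b / real n * m"
      using psi_pos by (simp add: m_def le_max_iff_disj)
  qed (simp add: add_pos_nonneg)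
  then show ?thesis
    unfolding m_def by (rule SUP_least)
qed

end
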